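(* Let $L\subseteq\mathcal{L}$ satisfy \[\forall e\in L:\quad\sum_{\{e'\in L\setminus\{e\}:d_{e'}\ge d_e\}}\big(\bar a_e(e')+\bar a_{e'}(e)\big)\le1.\] Then there exists $J\subseteq L$ such that $|J|\ge|L|/2$ and $\sum_{e'\in J\setminus\{e\}}\bar a_{e'}(e)\le3$ for every $e\in J$.
   Context: Constants $\alpha\ge0,N>0,\beta>0$. A link is $e=(s_e,r_e,P_e)$ with transmitter, receiver (points in the plane) and power $P_e>0$; $\mathcal{L}$ is the set of links. $d_e=d(s_e,r_e)$, $d_{e'e}=d(s_{e'},r_e)$, $S_e=P_e/d_e^\alpha$, $S_{e'e}=P_{e'}/d_{e'e}^\alpha$, $\gamma_e=\beta S_e/(S_e-\beta N)$, $a_{e'}(e)=\gamma_eS_{e'e}/S_e$, $\bar a_{e'}(e)=\min\{1,a_{e'}(e)\}$. *)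

theory Defs
  imports "HOL-Analysis.Analysis"
begin

text \<open>A link: transmitter, receiver (points in the plane) and power.\<close>
type_synonym link = "(real^2) \<times> (real^2) \<times> real"

definition snd_pt :: "link \<Rightarrow> real^2" where "snd_pt e = fst e"
definition rcv_pt :: "link \<Rightarrow> real^2" where "rcv_pt e = fst (snd e)"
definition pow :: "link \<Rightarrow> real" where "pow e = snd (snd e)"

definition len :: "link \<Rightarrow> real" where "len e = dist (snd_pt e) (rcv_pt e)"
definition xlen :: "link \<Rightarrow> link \<Rightarrow> real" where
  "xlen e' e = dist (snd_pt e') (rcv_pt e)"

definition sig :: "real \<Rightarrow> link \<Rightarrow> real" where
  "sig \<alpha> e = pow e / (len e powr \<alpha>)"
definition xsig :: "real \<Rightarrow> link \<Rightarrow> link \<Rightarrow> real" where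
  "xsig \<alpha> e' e = pow e' / (xlen e' e powr \<alpha>)"

definition gam :: "real \<Rightarrow> real \<Rightarrow> real \<Rightarrow> link \<Rightarrow> real" where
  "gam \<alpha> \<beta> N e = \<beta> * sig \<alpha> e / (sig \<alpha> e - \<beta> * N)"

definition aff :: "real \<Rightarrow> real \<Rightarrow> real \<Rightarrow> link \<Rightarrow> link \<Rightarrow> real" where
  "aff \<alpha> \<beta> N e' e = gam \<alpha> \<beta> N e * xsig \<alpha> e' e / sig \<alpha> e"
definition affb :: "real \<Rightarrow> real \<Rightarrow> real \<Rightarrow> link \<Rightarrow> link \<Rightarrow> real" where
  "affb \<alpha> \<beta> N e' e = min 1 (aff \<alpha> \<beta> N e' e)"

end

theory Submission
  imports Defs
begin

text \<open>Let \<open>S e\<close> be the total truncated affectance received by \<open>e\<close> from the rest of \<open>L\<close>.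
  Every ordered pair of distinct links is counted in the hypothesis at its shorter link
  (ties at either end), so summing the hypothesis over \<open>L\<close> gives \<open>\<Sum>e\<in>L. S e \<le> |L|\<close>.
  By Markov's inequality at most half of the links have \<open>S e > 2\<close>; the remaining links
  form \<open>J\<close>, and restricting the sum to \<open>J\<close> only decreases it.\<close>

lemma sum_Un_le:
  fixes f :: "'a \<Rightarrow> real"
  assumes "finite A" "finite B" "\<And>x. x \<in> A \<inter> B \<Longrightarrow> 0 \<le> f x"
  shows "sum f (A \<union> B) \<le> sum f A + sum f B"
proof -
  have "0 \<le> sum f (A \<inter> B)" using assms(3) by (rule sum_nonneg)
  then show ?thesis using sum_Un[OF assms(1,2), of f] by linarith
qed

lemma sum_offdiag_le_sum_ordered_pairs:
  fixes g :: "'a \<Rightarrow> 'a \<Rightarrow> real" and w :: "'a \<Rightarrow> 'b::linorder"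
  assumes "finite L" and "\<And>x y. x \<in> L \<Longrightarrow> y \<in> L \<Longrightarrow> 0 \<le> g x y"
  shows "(\<Sum>e\<in>L. \<Sum>e'\<in>L - {e}. g e' e)
           \<le> (\<Sum>e\<in>L. \<Sum>e'\<in>{e'\<in>L - {e}. w e \<le> w e'}. g e e' + g e' e)"
proof -
  define D where "D = Sigma L (\<lambda>e. L - {e})"
  define P where "P = Sigma L (\<lambda>e. {e'\<in>L - {e}. w e \<le> w e'})"
  define h where "h = (\<lambda>(e, e'). g e' e)"
  have fin: "finite P" "finite (prod.swap ` P)"
    using assms(1) unfolding P_def by auto
  have "D \<subseteq> P \<union> prod.swap ` P"
    unfolding D_def P_def by (auto simp: image_iff not_le intro: less_imp_le)
  then have "sum h D \<le> sum h (P \<union> prod.swap ` P)"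
    using fin by (intro sum_mono2) (auto simp: h_def P_def intro: assms(2))
  also have "\<dots> \<le> sum h P + sum h (prod.swap ` P)"
    using fin by (intro sum_Un_le) (auto simp: h_def P_def intro: assms(2))
  also have "sum h (prod.swap ` P) = sum (h \<circ> prod.swap) P"
    by (simp add: sum.reindex)
  also have "sum h P + sum (h \<circ> prod.swap) P = (\<Sum>(e, e')\<in>P. g e e' + g e' e)"
    by (simp add: sum.distrib[symmetric] h_def case_prod_beta add.commute)
  finally show ?thesis
    using assms(1) unfolding D_def P_def h_def by (simp add: sum.Sigma)
qed

lemma markov_card_le_sum:
  fixes f :: "'a \<Rightarrow> real"
  assumes "finite A" and "\<And>x. x \<in> A \<Longrightarrow> 0 \<le> f x"
  shows "t * card {x\<in>A. t < f x} \<le> sum f A"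
proof -
  have "t * card {x\<in>A. t < f x} = (\<Sum>x\<in>{x\<in>A. t < f x}. t)" by simp
  also have "\<dots> \<le> (\<Sum>x\<in>{x\<in>A. t < f x}. f x)" by (rule sum_mono) simp
  also have "\<dots> \<le> sum f A" using assms by (intro sum_mono2) auto
  finally show ?thesis .
qed

lemma card_low_values_ge_half:
  fixes f :: "'a \<Rightarrow> real"
  assumes "finite A" and "\<And>x. x \<in> A \<Longrightarrow> 0 \<le> f x" and "sum f A \<le> card A"
  shows "card A / 2 \<le> card {x\<in>A. f x \<le> 2}"
proof -
  have "card A = card {x\<in>A. f x \<le> 2} + card {x\<in>A. 2 < f x}"
    using assms(1) by (subst card_Un_disjoint[symmetric]) (auto intro: arg_cong[where f = card])
  moreover have "2 * real (card {x\<in>A. 2 < f x}) \<le> card A"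
    using markov_card_le_sum[of A f 2, OF assms(1,2)] assms(3) by linarith
  ultimately show ?thesis by simp
qed

lemma affb_nonneg:
  assumes "\<beta> > 0" "N > 0" "pow e' > 0" "sig \<alpha> e > \<beta> * N"
  shows "affb \<alpha> \<beta> N e' e \<ge> 0"
proof -
  have "sig \<alpha> e > 0" using assms by (smt (verit) mult_pos_pos)
  moreover have "xsig \<alpha> e' e \<ge> 0" unfolding xsig_def using assms by simp
  ultimately have "aff \<alpha> \<beta> N e' e \<ge> 0"
    unfolding aff_def gam_def using assms by simp
  thus ?thesis unfolding affb_def by simp
qed

theorem lemma8:
  fixes \<alpha> \<beta> N :: real and L :: "link set"
  assumes "\<alpha> \<ge> 0" and "N > 0" and "\<beta> > 0"
    and "finite L"
    and "\<forall>e\<in>L. pow e > 0"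
    and "\<forall>e\<in>L. sig \<alpha> e > \<beta> * N"
    and "\<forall>e\<in>L. (\<Sum>e'\<in>{e'\<in>L - {e}. len e' \<ge> len e}.
                    affb \<alpha> \<beta> N e e' + affb \<alpha> \<beta> N e' e) \<le> 1"
  shows "\<exists>J\<subseteq>L. real (card J) \<ge> real (card L) / 2 \<and>
           (\<forall>e\<in>J. (\<Sum>e'\<in>J - {e}. affb \<alpha> \<beta> N e' e) \<le> 3)"
proof -
  define S where "S e = (\<Sum>e'\<in>L - {e}. affb \<alpha> \<beta> N e' e)" for e
  define J where "J = {e\<in>L. S e \<le> 2}"
  have nonneg: "\<And>e e'. e \<in> L \<Longrightarrow> e' \<in> L \<Longrightarrow> 0 \<le> affb \<alpha> \<beta> N e' e"
    using assms affb_nonneg by blast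
  have "(\<Sum>e\<in>L. S e) \<le> (\<Sum>e\<in>L. \<Sum>e'\<in>{e'\<in>L - {e}. len e \<le> len e'}.
                            affb \<alpha> \<beta> N e e' + affb \<alpha> \<beta> N e' e)"
    unfolding S_def using assms(4) nonneg by (rule sum_offdiag_le_sum_ordered_pairs)
  also have "\<dots> \<le> (\<Sum>e\<in>L. 1)"
    using assms(7) by (intro sum_mono) simp
  finally have "card L / 2 \<le> card J"
    unfolding J_def using assms(4) nonneg
    by (intro card_low_values_ge_half) (auto simp: S_def intro: sum_nonneg)
  moreover have "(\<Sum>e'\<in>J - {e}. affb \<alpha> \<beta> N e' e) \<le> 3" if "e \<in> J" for e
  proof -
    have "(\<Sum>e'\<in>J - {e}. affb \<alpha> \<beta> N e' e) \<le> S e"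
      unfolding S_def using that assms(4) nonneg by (intro sum_mono2) (auto simp: J_def)
    with that show ?thesis by (simp add: J_def)
  qed
  ultimately show ?thesis by (intro exI[of _ J]) (auto simp: J_def)
qed

end
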